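(* Let $p$ be a prime, $D$ the quaternion algebra over $\mathbb{Q}$ ramified exactly at $\{p,\infty\}$, $\mathcal{O}$ a maximal order, $U_1=\prod_q\mathrm{Stab}_{\mathrm{GU}_2(D_q)}(\mathcal{O}_q^2)\subset\mathrm{GU}_2(D_{\mathbb{A}_f})$ and $\Gamma^{(1)}=\mathrm{GU}_2(D)\cap U_1$. Then \[\Gamma^{(1)}=\mathrm{SU}_2(D)\cap\mathrm{GL}_2(\mathcal{O})=\mathrm{GU}_2(\mathcal{O}),\] where $\mathrm{GU}_2(\mathcal{O})=\{\gamma\in\mathrm{GU}_2(D)\cap M_2(\mathcal{O}):\mu(\gamma)\in\mathbb{Z}^\times\}$.
   Context: Quaternion conjugation $x\mapsto\overline{x}$; $\overline{g}^T$ is the transpose of the entrywise conjugate. $\mathrm{GU}_2(D)=\{g\in M_2(D): g\overline{g}^T=\mu(g)I,\ \mu(g)\in\mathbb{Q}^\times\}$, $\mathrm{SU}_2(D)$ its elements of similitude $1$. $\mathrm{GL}_2(\mathcal{O})$ is the group of matrices in $M_2(\mathcal{O})$ with inverse in $M_2(\mathcal{O})$. For each prime $q$, $D_q=D\otimes\mathbb{Q}_q$, $\mathcal{O}_q=\mathcal{O}\otimes\mathbb{Z}_q$, $\mathrm{GU}_2(D_q)$ defined analogously with $\mu\in\mathbb{Q}_q^\times$; $\mathrm{GU}_2(D_{\mathbb{A}_f})$ is the restricted product of the $\mathrm{GU}_2(D_q)$ with respect to $\mathrm{GU}_2(D_q)\cap\mathrm{GL}_2(\mathcal{O}_q)$,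 with $\mathrm{GU}_2(D)$ embedded diagonally. $\mathcal{O}_q^2$ consists of row vectors, with stabilizer taken under right multiplication. *)

theory Defs
  imports Complex_Main "HOL-Computational_Algebra.Primes"
begin

text \<open>Elements x0 + x1 i + x2 j + x3 k with i^2 = a, j^2 = b, k = ij = -ji.\<close>

datatype quat = Quat (q0: rat) (q1: rat) (q2: rat) (q3: rat)

definition qzero :: quat where "qzero = Quat 0 0 0 0"
definition qone :: quat where "qone = Quat 1 0 0 0"
definition qrat :: "rat \<Rightarrow> quat" where "qrat r = Quat r 0 0 0"

definition qadd :: "quat \<Rightarrow> quat \<Rightarrow> quat" where
  "qadd x y = Quat (q0 x + q0 y) (q1 x + q1 y) (q2 x + q2 y) (q3 x + q3 y)"

definition qneg :: "quat \<Rightarrow> quat" where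
  "qneg x = Quat (- q0 x) (- q1 x) (- q2 x) (- q3 x)"

definition qscal :: "rat \<Rightarrow> quat \<Rightarrow> quat" where
  "qscal r x = Quat (r * q0 x) (r * q1 x) (r * q2 x) (r * q3 x)"

definition qconj :: "quat \<Rightarrow> quat" where
  "qconj x = Quat (q0 x) (- q1 x) (- q2 x) (- q3 x)"

definition qmul :: "int \<Rightarrow> int \<Rightarrow> quat \<Rightarrow> quat \<Rightarrow> quat" where
  "qmul a b x y = (let A = rat_of_int a; B = rat_of_int b in
     Quat (q0 x * q0 y + A * q1 x * q1 y + B * q2 x * q2 y - A * B * q3 x * q3 y)
          (q0 x * q1 y + q1 x * q0 y - B * q2 x * q3 y + B * q3 x * q2 y)
          (q0 x * q2 y + q2 x * q0 y + A * q1 x * q3 y - A * q3 x * q1 y)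
          (q0 x * q3 y + q3 x * q0 y + q1 x * q2 y - q2 x * q1 y))"

text \<open>A quaternion algebra is ramified at a place v iff its reduced norm form
  x0^2 - a x1^2 - b x2^2 + ab x3^2 is anisotropic over Q_v.  At a prime q, isotropy over Q_q of an integral form
  is expressed (via compactness of Z_q^4) as the existence, for every k, of a
  primitive integral solution modulo q^k.\<close>

definition ramified_inf :: "int \<Rightarrow> int \<Rightarrow> bool" where
  "ramified_inf a b \<longleftrightarrow>
     \<not> (\<exists>x0 x1 x2 x3 :: real. (x0, x1, x2, x3) \<noteq> (0, 0, 0, 0) \<and>
          x0^2 - real_of_int a * x1^2 - real_of_int b * x2^2
            + real_of_int a * real_of_int b * x3^2 = 0)"

definition ramified_at :: "int \<Rightarrow> int \<Rightarrow> nat \<Rightarrow> bool" where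
  "ramified_at a b q \<longleftrightarrow>
     \<not> (\<forall>k::nat. \<exists>x0 x1 x2 x3 :: int.
          \<not> (int q dvd x0 \<and> int q dvd x1 \<and> int q dvd x2 \<and> int q dvd x3) \<and>
          (int q ^ k) dvd (x0^2 - a * x1^2 - b * x2^2 + a * b * x3^2))"

definition is_order :: "int \<Rightarrow> int \<Rightarrow> quat set \<Rightarrow> bool" where
  "is_order a b Ov \<longleftrightarrow>
     qone \<in> Ov \<and> (\<forall>x\<in>Ov. \<forall>y\<in>Ov. qadd x y \<in> Ov \<and> qmul a b x y \<in> Ov) \<and>
     (\<forall>x\<in>Ov. qneg x \<in> Ov) \<and>
     (\<exists>e1 e2 e3 e4.
        (\<forall>c1 c2 c3 c4 :: rat.
           qadd (qadd (qscal c1 e1) (qscal c2 e2)) (qadd (qscal c3 e3) (qscal c4 e4)) = qzero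
           \<longrightarrow> c1 = 0 \<and> c2 = 0 \<and> c3 = 0 \<and> c4 = 0) \<and>
        Ov = {qadd (qadd (qscal (of_int n1) e1) (qscal (of_int n2) e2))
                  (qadd (qscal (of_int n3) e3) (qscal (of_int n4) e4)) | n1 n2 n3 n4 :: int. True})"

definition maximal_order :: "int \<Rightarrow> int \<Rightarrow> quat set \<Rightarrow> bool" where
  "maximal_order a b Ov \<longleftrightarrow>
     is_order a b Ov \<and> (\<forall>Ov'. is_order a b Ov' \<and> Ov \<subseteq> Ov' \<longrightarrow> Ov' = Ov)"

text \<open>O_(q) = Ov \<otimes> Z_(q) = D \<inter> O_q.\<close>
definition loc_order :: "quat set \<Rightarrow> nat \<Rightarrow> quat set" where
  "loc_order Ov q = {x. \<exists>n::int. n \<noteq> 0 \<and> \<not> int q dvd n \<and> qscal (of_int n) x \<in> Ov}"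

datatype mat2 = M2 (m11: quat) (m12: quat) (m21: quat) (m22: quat)

definition mmul :: "int \<Rightarrow> int \<Rightarrow> mat2 \<Rightarrow> mat2 \<Rightarrow> mat2" where
  "mmul a b g h = M2
     (qadd (qmul a b (m11 g) (m11 h)) (qmul a b (m12 g) (m21 h)))
     (qadd (qmul a b (m11 g) (m12 h)) (qmul a b (m12 g) (m22 h)))
     (qadd (qmul a b (m21 g) (m11 h)) (qmul a b (m22 g) (m21 h)))
     (qadd (qmul a b (m21 g) (m12 h)) (qmul a b (m22 g) (m22 h)))"

definition mconjT :: "mat2 \<Rightarrow> mat2" where
  "mconjT g = M2 (qconj (m11 g)) (qconj (m21 g)) (qconj (m12 g)) (qconj (m22 g))"

definition mscal :: "rat \<Rightarrow> mat2" where
  "mscal r = M2 (qrat r) qzero qzero (qrat r)"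

definition mone :: mat2 where "mone = mscal 1"

definition entries_in :: "mat2 \<Rightarrow> quat set \<Rightarrow> bool" where
  "entries_in g S \<longleftrightarrow> m11 g \<in> S \<and> m12 g \<in> S \<and> m21 g \<in> S \<and> m22 g \<in> S"

definition vmul :: "int \<Rightarrow> int \<Rightarrow> quat \<times> quat \<Rightarrow> mat2 \<Rightarrow> quat \<times> quat" where
  "vmul a b v g =
     (qadd (qmul a b (fst v) (m11 g)) (qmul a b (snd v) (m21 g)),
      qadd (qmul a b (fst v) (m12 g)) (qmul a b (snd v) (m22 g)))"

definition GU2 :: "int \<Rightarrow> int \<Rightarrow> mat2 set" where
  "GU2 a b = {g. \<exists>\<mu>::rat. \<mu> \<noteq> 0 \<and> mmul a b g (mconjT g) = mscal \<mu>}"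

definition sim :: "int \<Rightarrow> int \<Rightarrow> mat2 \<Rightarrow> rat" where
  "sim a b g = (THE \<mu>. mmul a b g (mconjT g) = mscal \<mu>)"

definition SU2 :: "int \<Rightarrow> int \<Rightarrow> mat2 set" where
  "SU2 a b = {g \<in> GU2 a b. sim a b g = 1}"

definition GL2O :: "int \<Rightarrow> int \<Rightarrow> quat set \<Rightarrow> mat2 set" where
  "GL2O a b Ov = {g. entries_in g Ov \<and>
      (\<exists>h. entries_in h Ov \<and> mmul a b g h = mone \<and> mmul a b h g = mone)}"

definition GU2O :: "int \<Rightarrow> int \<Rightarrow> quat set \<Rightarrow> mat2 set" where
  "GU2O a b Ov = {g \<in> GU2 a b. entries_in g Ov \<and> sim a b g \<in> {1, -1}}"

text \<open>Gamma^(1) = GU_2(D) \<inter> U_1, with GU_2(D) embedded diagonally; the local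
  condition at q is that g stabilises O_q^2 under right multiplication, which
  for g with entries in D is read on D-points: O_(q)^2 g = O_(q)^2.\<close>
definition Gamma1 :: "int \<Rightarrow> int \<Rightarrow> quat set \<Rightarrow> mat2 set" where
  "Gamma1 a b Ov = {g \<in> GU2 a b. \<forall>q. prime q \<longrightarrow>
      (\<lambda>v. vmul a b v g) ` (loc_order Ov q \<times> loc_order Ov q) = loc_order Ov q \<times> loc_order Ov q}"

end

theory Submission
  imports Defs
begin

(* Ramification at infinity forces a, b < 0, so the reduced norm N is positive definite; this
   and the fact that O is an order are all that is used.  Norms of elements of O are integers, because the rationals
   N(x)^k = N(x^k) have bounded denominators.

   The similitude of g is N(g11) + N(g12) > 0.  Hence an element of GU_2(O) has similitude 1,
   and a norm computation shows that g g* = 1 implies g* g = 1, so g* is an inverse in M_2(O).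
   Conversely, if g stabilises O_(q)^2 for all q, its rows lie in the intersection of the O_(q),
   which is O, so mu(g) is a positive integer; writing e_i = v_i g with v_i in O_(q)^2 and
   multiplying by g* shows that 1/mu(g) = N(v_11) + N(v_21) is integral at q for every q, hence
   mu(g) = 1. *)

definition qnorm :: "int \<Rightarrow> int \<Rightarrow> quat \<Rightarrow> rat" where
  "qnorm a b x = q0 x ^ 2 - of_int a * q1 x ^ 2 - of_int b * q2 x ^ 2
     + of_int a * of_int b * q3 x ^ 2"

lemma qmul_assoc: "qmul a b (qmul a b x y) z = qmul a b x (qmul a b y z)"
  by (simp add: qmul_def Let_def algebra_simps)

lemma qmul_distrib_left: "qmul a b x (qadd y z) = qadd (qmul a b x y) (qmul a b x z)"
  and qmul_distrib_right: "qmul a b (qadd x y) z = qadd (qmul a b x z) (qmul a b y z)"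
  by (simp_all add: qmul_def qadd_def Let_def algebra_simps)

lemma qadd_assoc: "qadd (qadd x y) z = qadd x (qadd y z)"
  and qadd_commute: "qadd x y = qadd y x"
  and qadd_left_commute: "qadd x (qadd y z) = qadd y (qadd x z)"
  by (simp_all add: qadd_def algebra_simps)

lemmas qadd_ac = qadd_assoc qadd_commute qadd_left_commute

lemma qmul_self_qconj: "qmul a b x (qconj x) = qrat (qnorm a b x)"
  and qmul_qconj_self: "qmul a b (qconj x) x = qrat (qnorm a b x)"
  by (simp_all add: qmul_def qconj_def qrat_def qnorm_def Let_def algebra_simps power2_eq_square)

lemma qnorm_qmul: "qnorm a b (qmul a b x y) = qnorm a b x * qnorm a b y"
  by (simp add: qmul_def qnorm_def Let_def algebra_simps power2_eq_square)

lemma qconj_qmul: "qconj (qmul a b x y) = qmul a b (qconj y) (qconj x)"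
  by (simp add: qmul_def qconj_def Let_def algebra_simps)

lemma qconj_qadd: "qconj (qadd x y) = qadd (qconj x) (qconj y)"
  and qconj_qconj [simp]: "qconj (qconj x) = x"
  and qconj_qzero [simp]: "qconj qzero = qzero"
  by (simp_all add: qadd_def qconj_def qzero_def)

lemma qnorm_qscal: "qnorm a b (qscal r x) = r ^ 2 * qnorm a b x"
  and qnorm_qconj [simp]: "qnorm a b (qconj x) = qnorm a b x"
  and qnorm_qneg [simp]: "qnorm a b (qneg x) = qnorm a b x"
  and qnorm_qzero [simp]: "qnorm a b qzero = 0"
  and qnorm_qone [simp]: "qnorm a b qone = 1"
  by (simp_all add: qnorm_def qscal_def qconj_def qneg_def qzero_def qone_def
      algebra_simps power2_eq_square)

lemma qadd_qzero [simp]: "qadd x qzero = x" "qadd qzero x = x"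
  and qmul_qzero [simp]: "qmul a b x qzero = qzero" "qmul a b qzero x = qzero"
  and qmul_qone [simp]: "qmul a b x qone = x" "qmul a b qone x = x"
  and qscal_1 [simp]: "qscal 1 x = x"
  by (simp_all add: qadd_def qzero_def qmul_def qone_def qscal_def Let_def)

lemma qmul_qrat: "qmul a b (qrat r) x = qscal r x" "qmul a b x (qrat r) = qscal r x"
  and qmul_qscal: "qmul a b (qscal r x) y = qscal r (qmul a b x y)"
    "qmul a b x (qscal r y) = qscal r (qmul a b x y)"
  and qmul_qneg: "qmul a b (qneg x) y = qneg (qmul a b x y)"
  by (simp_all add: qmul_def qrat_def qscal_def qneg_def Let_def algebra_simps)

lemma qscal_qscal: "qscal r (qscal s x) = qscal (r * s) x"
  and qscal_qadd: "qscal r (qadd x y) = qadd (qscal r x) (qscal r y)"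
  by (simp_all add: qscal_def qadd_def algebra_simps)

lemma qadd_qrat: "qadd (qrat r) (qrat s) = qrat (r + s)"
  and qrat_eq_iff: "qrat r = qrat s \<longleftrightarrow> r = s"
  by (simp_all add: qadd_def qrat_def)

lemma qadd_eq_qzero_imp: "qadd x y = qzero \<Longrightarrow> x = qneg y"
  by (cases x; cases y) (auto simp: qadd_def qzero_def qneg_def)

lemma qadd_qscal_qneg: "qadd (qscal r x) (qneg (qscal r x)) = qzero"
  by (simp add: qadd_def qzero_def qneg_def qscal_def)

lemma qnorm_qone_qadd: "qnorm a b (qadd qone x) = 1 + 2 * q0 x + qnorm a b x"
  by (simp add: qnorm_def qadd_def qone_def algebra_simps power2_eq_square)

lemma qconj_eq_trace_minus: "qconj x = qadd (qrat (2 * q0 x)) (qneg x)"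
  by (simp add: qconj_def qadd_def qrat_def qneg_def)

lemma ramified_inf_imp_neg:
  assumes "ramified_inf a b"
  shows "a < 0" "b < 0"
proof -
  show "a < 0"
  proof (rule ccontr)
    assume "\<not> a < 0"
    then have "sqrt (real_of_int a) ^ 2 - real_of_int a * 1 ^ 2 - real_of_int b * 0 ^ 2
        + real_of_int a * real_of_int b * 0 ^ 2 = 0"
      by simp
    then show False
      using assms unfolding ramified_inf_def by (metis zero_neq_one prod.inject)
  qed
  show "b < 0"
  proof (rule ccontr)
    assume "\<not> b < 0"
    then have "sqrt (real_of_int b) ^ 2 - real_of_int a * 0 ^ 2 - real_of_int b * 1 ^ 2
        + real_of_int a * real_of_int b * 0 ^ 2 = 0"
      by simp
    then show False
      using assms unfolding ramified_inf_def by (metis zero_neq_one prod.inject)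
  qed
qed

lemma qnorm_as_positive_form:
  "qnorm a b x = q0 x ^ 2 + of_int (- a) * q1 x ^ 2 + of_int (- b) * q2 x ^ 2
     + of_int (a * b) * q3 x ^ 2"
  by (simp add: qnorm_def)

lemma qnorm_nonneg:
  assumes "a < 0" "b < 0"
  shows "0 \<le> qnorm a b x"
  using assms unfolding qnorm_as_positive_form
  by (intro add_nonneg_nonneg mult_nonneg_nonneg) (auto simp: zero_le_mult_iff)

lemma qnorm_eq_0_iff:
  assumes "a < 0" "b < 0"
  shows "qnorm a b x = 0 \<longleftrightarrow> x = qzero"
proof
  assume x: "qnorm a b x = 0"
  have pos: "(0::rat) < of_int (- a)" "(0::rat) < of_int (- b)" "(0::rat) < of_int (a * b)"
    using assms by (simp_all only: of_int_0_less_iff zero_less_mult_iff) simp_all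
  then have "0 \<le> of_int (- a) * q1 x ^ 2" "0 \<le> of_int (- b) * q2 x ^ 2"
    "0 \<le> of_int (a * b) * q3 x ^ 2"
    by (meson less_imp_le mult_nonneg_nonneg zero_le_power2)+
  then have "q0 x ^ 2 = 0" "of_int (- a) * q1 x ^ 2 = 0" "of_int (- b) * q2 x ^ 2 = 0"
    "of_int (a * b) * q3 x ^ 2 = 0"
    using x zero_le_power2[of "q0 x"] unfolding qnorm_as_positive_form by linarith+
  then show "x = qzero"
    using pos by (cases x) (simp add: qzero_def)
qed simp

section \<open>Integrality in orders\<close>

lemma is_orderD:
  assumes "is_order a b Ov"
  shows "qone \<in> Ov"
    and "x \<in> Ov \<Longrightarrow> y \<in> Ov \<Longrightarrow> qadd x y \<in> Ov"
    and "x \<in> Ov \<Longrightarrow> y \<in> Ov \<Longrightarrow> qmul a b x y \<in> Ov"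
    and "x \<in> Ov \<Longrightarrow> qneg x \<in> Ov"
  using assms unfolding is_order_def by blast+

definition int_span :: "quat \<Rightarrow> quat \<Rightarrow> quat \<Rightarrow> quat \<Rightarrow> quat set" where
  "int_span e1 e2 e3 e4 = {qadd (qadd (qscal (of_int n1) e1) (qscal (of_int n2) e2))
     (qadd (qscal (of_int n3) e3) (qscal (of_int n4) e4)) | n1 n2 n3 n4 :: int. True}"

lemma is_order_int_span:
  assumes "is_order a b Ov"
  obtains e1 e2 e3 e4 where "Ov = int_span e1 e2 e3 e4"
  using assms unfolding is_order_def int_span_def by blast

lemma int_span_qscal:
  assumes "x \<in> int_span e1 e2 e3 e4"
  shows "qscal (of_int k) x \<in> int_span e1 e2 e3 e4"
proof -
  obtain n1 n2 n3 n4 :: int where "x = qadd (qadd (qscal (of_int n1) e1) (qscal (of_int n2) e2))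
      (qadd (qscal (of_int n3) e3) (qscal (of_int n4) e4))"
    using assms unfolding int_span_def by blast
  then have "qscal (of_int k) x = qadd (qadd (qscal (of_int (k * n1)) e1) (qscal (of_int (k * n2)) e2))
      (qadd (qscal (of_int (k * n3)) e3) (qscal (of_int (k * n4)) e4))"
    by (simp add: qscal_qadd qscal_qscal ac_simps)
  then show ?thesis unfolding int_span_def by blast
qed

lemma order_qscal_of_int:
  assumes "is_order a b Ov" "x \<in> Ov"
  shows "qscal (of_int k) x \<in> Ov"
  using assms int_span_qscal by (metis is_order_int_span)

lemma order_qzero: "is_order a b Ov \<Longrightarrow> qzero \<in> Ov"
  using order_qscal_of_int[of a b Ov qone 0] is_orderD(1) by (simp add: qscal_def qzero_def)

lemma order_qrat_of_int: "is_order a b Ov \<Longrightarrow> qrat (of_int k) \<in> Ov"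
  using order_qscal_of_int[of a b Ov qone k] is_orderD(1) by (simp add: qscal_def qrat_def qone_def)

lemma common_denominator:
  fixes R :: "rat set"
  assumes "finite R"
  shows "\<exists>d::int. 0 < d \<and> (\<forall>r\<in>R. of_int d * r \<in> \<int>)"
  using assms
proof (induction rule: finite_induct)
  case (insert r R)
  obtain d where d: "0 < d" "\<forall>s\<in>R. of_int d * s \<in> \<int>"
    using insert.IH by blast
  obtain u v where uv: "quotient_of r = (u, v)" by (cases "quotient_of r")
  have v: "0 < v" "of_int v * r = of_int u"
    using quotient_of_denom_pos[OF uv] quotient_of_div[OF uv] by simp_all
  have "of_int (v * d) * s \<in> \<int>" if "s \<in> insert r R" for s
  proof (cases "s = r")
    case True
    then show ?thesis using v(2) by (simp add: mult.commute[of v] mult.assoc)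
  next
    case False
    then have "of_int v * (of_int d * s) \<in> \<int>" using d(2) that by simp
    then show ?thesis by (simp add: mult.assoc)
  qed
  then show ?case using v(1) d(1) by (intro exI[of _ "v * d"]) simp
qed (auto intro: exI[of _ 1])

lemma int_span_common_denominator:
  "\<exists>d::int. 0 < d \<and> (\<forall>x\<in>int_span e1 e2 e3 e4. \<forall>f\<in>{q0, q1, q2, q3}. of_int d * f x \<in> \<int>)"
proof -
  obtain d :: int where d: "0 < d"
    "\<forall>r\<in>(\<lambda>(f, e). f e) ` ({q0, q1, q2, q3} \<times> {e1, e2, e3, e4}). of_int d * r \<in> \<int>"
    using common_denominator[of "(\<lambda>(f, e). f e) ` ({q0, q1, q2, q3} \<times> {e1, e2, e3, e4})"]
    by blast
  have "of_int d * f x \<in> \<int>" if "x \<in> int_span e1 e2 e3 e4" "f \<in> {q0, q1, q2, q3}" for x f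
  proof -
    obtain n1 n2 n3 n4 :: int where "x = qadd (qadd (qscal (of_int n1) e1) (qscal (of_int n2) e2))
        (qadd (qscal (of_int n3) e3) (qscal (of_int n4) e4))"
      using \<open>x \<in> int_span e1 e2 e3 e4\<close> unfolding int_span_def by blast
    then have "of_int d * f x = of_int n1 * (of_int d * f e1) + of_int n2 * (of_int d * f e2)
        + of_int n3 * (of_int d * f e3) + of_int n4 * (of_int d * f e4)"
      using \<open>f \<in> {q0, q1, q2, q3}\<close> by (auto simp: qadd_def qscal_def distrib_left)
    also have "\<dots> \<in> \<int>"
    proof -
      have coeff: "of_int d * f e \<in> \<int>" if "e \<in> {e1, e2, e3, e4}" for e
        using d(2) \<open>f \<in> {q0, q1, q2, q3}\<close> that by fastforce
      show ?thesis by (intro Ints_add; rule Ints_mult[OF Ints_of_int]) (simp_all add: coeff)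
    qed
    finally show ?thesis .
  qed
  then show ?thesis using d(1) by blast
qed

lemma Ints_if_powers_bounded_denominator:
  fixes r :: rat
  assumes "0 < d" and powers: "\<And>k. of_int d * r ^ k \<in> \<int>"
  shows "r \<in> \<int>"
proof -
  obtain u v where uv: "quotient_of r = (u, v)" by (cases "quotient_of r")
  have v: "0 < v" and "coprime u v" and r: "r = of_int u / of_int v"
    using quotient_of_denom_pos[OF uv] quotient_of_coprime[OF uv] quotient_of_div[OF uv] by simp_all
  have "v ^ k \<le> d" for k
  proof -
    obtain m where "of_int d * r ^ k = of_int m" using powers by (metis Ints_cases)
    then have "d * u ^ k = m * v ^ k"
      using v by (simp add: r power_divide field_simps flip: of_int_power of_int_mult)
    then have "v ^ k dvd d * u ^ k" by simp
    moreover have "coprime (v ^ k) (u ^ k)" using \<open>coprime u v\<close> by (simp add: coprime_commute)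
    ultimately have "v ^ k dvd d" using coprime_dvd_mult_left_iff by blast
    then show ?thesis using \<open>0 < d\<close> by (simp add: zdvd_imp_le)
  qed
  have "v = 1"
  proof (rule ccontr)
    assume "v \<noteq> 1"
    then have "2 ^ nat d \<le> v ^ nat d" using v by (simp add: power_mono)
    moreover have "int (nat d) < 2 ^ nat d" by (metis of_nat_less_two_power of_nat_numeral)
    ultimately show False using \<open>v ^ nat d \<le> d\<close> \<open>0 < d\<close> by simp
  qed
  then show ?thesis using r by simp
qed

lemma qnorm_scaled_in_Ints:
  assumes "\<forall>f\<in>{q0, q1, q2, q3}. of_int d * f x \<in> \<int>"
  shows "of_int (d ^ 2) * qnorm a b x \<in> \<int>"
proof -
  obtain x0 x1 x2 x3 where "of_int d * q0 x = of_int x0" "of_int d * q1 x = of_int x1"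
      "of_int d * q2 x = of_int x2" "of_int d * q3 x = of_int x3"
    using assms by (auto elim!: Ints_cases)
  then have "of_int (d ^ 2) * qnorm a b x = of_int (x0 ^ 2 - a * x1 ^ 2 - b * x2 ^ 2 + a * b * x3 ^ 2)"
    by (simp add: qnorm_def power_mult_distrib algebra_simps flip: power_mult_distrib)
  then show ?thesis by simp
qed

lemma order_qnorm_in_Ints:
  assumes "is_order a b Ov" "x \<in> Ov"
  shows "qnorm a b x \<in> \<int>"
proof -
  obtain d where "0 < d" and d: "\<forall>y\<in>Ov. \<forall>f\<in>{q0, q1, q2, q3}. of_int d * f y \<in> \<int>"
    using int_span_common_denominator is_order_int_span[OF assms(1)] by metis
  have powers: "\<exists>y\<in>Ov. qnorm a b y = qnorm a b x ^ k" for k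
  proof (induction k)
    case 0
    show ?case using is_orderD(1)[OF assms(1)] qnorm_qone by (intro bexI[of _ qone]) simp_all
  next
    case (Suc k)
    then obtain y where "y \<in> Ov" "qnorm a b y = qnorm a b x ^ k" by blast
    moreover have "qmul a b x y \<in> Ov" using is_orderD(3)[OF assms] \<open>y \<in> Ov\<close> .
    ultimately show ?case by (metis qnorm_qmul power_Suc)
  qed
  have "of_int (d ^ 2) * qnorm a b x ^ k \<in> \<int>" for k
  proof -
    obtain y where "y \<in> Ov" "qnorm a b y = qnorm a b x ^ k" using powers by blast
    then show ?thesis using qnorm_scaled_in_Ints[of d y a b] d by simp
  qed
  moreover have "0 < d ^ 2" using \<open>0 < d\<close> by simp
  ultimately show ?thesis by (rule Ints_if_powers_bounded_denominator[rotated])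
qed

lemma order_qconj:
  assumes "is_order a b Ov" "x \<in> Ov"
  shows "qconj x \<in> Ov"
proof -
  have "qnorm a b (qadd qone x) \<in> \<int>" "qnorm a b x \<in> \<int>"
    using assms is_orderD(1,2)[OF assms(1)] order_qnorm_in_Ints by blast+
  then have "qnorm a b (qadd qone x) - 1 - qnorm a b x \<in> \<int>"
    by (intro Ints_diff Ints_1)
  then have "2 * q0 x \<in> \<int>"
    by (simp add: qnorm_qone_qadd)
  then obtain m where "2 * q0 x = of_int m" by (metis Ints_cases)
  then show ?thesis
    unfolding qconj_eq_trace_minus using assms is_orderD(2,4)[OF assms(1)] order_qrat_of_int
    by simp
qed

section \<open>Localisations of an order\<close>

definition Ints_loc :: "nat \<Rightarrow> rat set" where
  "Ints_loc q = {r. \<exists>n. \<not> int q dvd n \<and> of_int n * r \<in> \<int>}"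

lemma prime_not_dvd_mult:
  assumes "prime q" "\<not> int q dvd m" "\<not> int q dvd n"
  shows "\<not> int q dvd m * n"
  using assms prime_dvd_mult_iff[of "int q"] by simp

lemma Ints_loc_add:
  assumes "prime q" "r \<in> Ints_loc q" "s \<in> Ints_loc q"
  shows "r + s \<in> Ints_loc q"
proof -
  obtain m n where "\<not> int q dvd m" "of_int m * r \<in> \<int>" "\<not> int q dvd n" "of_int n * s \<in> \<int>"
    using assms(2,3) unfolding Ints_loc_def by blast
  moreover have "of_int (m * n) * (r + s) = of_int n * (of_int m * r) + of_int m * (of_int n * s)"
    by (simp add: algebra_simps)
  ultimately show ?thesis
    unfolding Ints_loc_def using prime_not_dvd_mult[OF assms(1)]
    by (intro CollectI exI[of _ "m * n"]) (metis Ints_add Ints_mult Ints_of_int)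
qed

lemma not_dvd_if_inverse_in_Ints_loc:
  assumes "of_int M * r = 1" "r \<in> Ints_loc q"
  shows "\<not> int q dvd M"
proof
  assume "int q dvd M"
  obtain n K where n: "\<not> int q dvd n" and "of_int n * r = of_int K"
    using assms(2) unfolding Ints_loc_def by (auto elim!: Ints_cases)
  then have "of_int n = (of_int (K * M) :: rat)"
    using assms(1) by (metis mult.commute mult.left_neutral mult.assoc of_int_mult)
  then have "n = K * M" by (simp only: of_int_eq_iff)
  then show False using n \<open>int q dvd M\<close> by simp
qed

lemma pos_int_eq_1_if_no_prime_divisor:
  fixes M :: int
  assumes "0 < M" "\<And>q. prime q \<Longrightarrow> \<not> int q dvd M"
  shows "M = 1"
proof (rule ccontr)
  assume "M \<noteq> 1"
  then have "nat M \<noteq> 1" using \<open>0 < M\<close> by simp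
  then obtain q where "prime q" "q dvd nat M" using prime_factor_nat by blast
  then have "int q dvd int (nat M)" by (simp only: int_dvd_int_iff)
  then have "int q dvd M" using \<open>0 < M\<close> by simp
  then show False using assms(2) \<open>prime q\<close> by blast
qed

lemma order_subset_loc_order:
  assumes "prime q"
  shows "Ov \<subseteq> loc_order Ov q"
  using assms prime_gt_1_nat[of q] unfolding loc_order_def
  by (auto intro!: exI[of _ 1] simp: zdvd1_eq)

lemma loc_order_qadd:
  assumes "is_order a b Ov" "prime q" "x \<in> loc_order Ov q" "y \<in> loc_order Ov q"
  shows "qadd x y \<in> loc_order Ov q"
proof -
  obtain m n where m: "m \<noteq> 0" "\<not> int q dvd m" "qscal (of_int m) x \<in> Ov"
    and n: "n \<noteq> 0" "\<not> int q dvd n" "qscal (of_int n) y \<in> Ov"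
    using assms(3,4) unfolding loc_order_def by blast
  have "qscal (of_int (m * n)) (qadd x y)
      = qadd (qscal (of_int n) (qscal (of_int m) x)) (qscal (of_int m) (qscal (of_int n) y))"
    by (simp add: qscal_qscal qscal_qadd mult.commute)
  also have "\<dots> \<in> Ov" using is_orderD(2) order_qscal_of_int assms(1) m n by simp
  finally show ?thesis
    unfolding loc_order_def using m n prime_not_dvd_mult[OF assms(2)]
    by (intro CollectI exI[of _ "m * n"]) simp
qed

lemma loc_order_qmul:
  assumes "is_order a b Ov" "prime q" "x \<in> loc_order Ov q" "y \<in> loc_order Ov q"
  shows "qmul a b x y \<in> loc_order Ov q"
proof -
  obtain m n where m: "m \<noteq> 0" "\<not> int q dvd m" "qscal (of_int m) x \<in> Ov"
    and n: "n \<noteq> 0" "\<not> int q dvd n" "qscal (of_int n) y \<in> Ov"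
    using assms(3,4) unfolding loc_order_def by blast
  have "qscal (of_int (m * n)) (qmul a b x y) = qmul a b (qscal (of_int m) x) (qscal (of_int n) y)"
    by (simp add: qmul_qscal qscal_qscal mult.commute)
  also have "\<dots> \<in> Ov" using is_orderD(3) assms(1) m n by simp
  finally show ?thesis
    unfolding loc_order_def using m n prime_not_dvd_mult[OF assms(2)]
    by (intro CollectI exI[of _ "m * n"]) simp
qed

lemma qnorm_loc_order_in_Ints_loc:
  assumes "is_order a b Ov" "prime q" "x \<in> loc_order Ov q"
  shows "qnorm a b x \<in> Ints_loc q"
proof -
  obtain n where n: "\<not> int q dvd n" "qscal (of_int n) x \<in> Ov"
    using assms(3) unfolding loc_order_def by blast
  then have "of_int (n ^ 2) * qnorm a b x \<in> \<int>"
    using order_qnorm_in_Ints[OF assms(1) n(2)] by (simp add: qnorm_qscal)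
  moreover have "\<not> int q dvd n ^ 2"
    using n(1) prime_dvd_power[of "int q" n 2] assms(2) by auto
  ultimately show ?thesis unfolding Ints_loc_def by blast
qed

lemma one_in_int_ideal:
  fixes I :: "int set"
  assumes closed: "\<And>m n k. m \<in> I \<Longrightarrow> n \<in> I \<Longrightarrow> m - k * n \<in> I"
    and unit_at: "\<And>q. prime q \<Longrightarrow> \<exists>n\<in>I. \<not> int q dvd n"
  shows "1 \<in> I"
proof -
  obtain n0 where "n0 \<in> I" "n0 \<noteq> 0"
    using unit_at[of 2] by force
  then have "int (nat \<bar>n0\<bar>) \<in> I"
    using closed[of n0 n0 2] by (cases "n0 < 0") simp_all
  then have ex: "\<exists>m. 0 < m \<and> int m \<in> I" using \<open>n0 \<noteq> 0\<close> by (intro exI[of _ "nat \<bar>n0\<bar>"]) simp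
  define m where "m = (LEAST m. 0 < m \<and> int m \<in> I)"
  have m: "0 < m" "int m \<in> I" using LeastI_ex[OF ex] unfolding m_def by blast+
  have m_dvd: "int m dvd n" if "n \<in> I" for n
  proof (rule ccontr)
    assume "\<not> int m dvd n"
    then have pos: "0 < n mod int m" using m(1) by (simp add: order_le_neq_trans dvd_eq_mod_eq_0)
    moreover have "n mod int m \<in> I"
      using closed[OF that m(2), of "n div int m"] by (simp add: minus_div_mult_eq_mod)
    ultimately have "m \<le> nat (n mod int m)"
      unfolding m_def by (intro Least_le) simp
    then show False using pos pos_mod_bound[of "int m" n] m(1) by linarith
  qed
  have "m = 1"
  proof (rule ccontr)
    assume "m \<noteq> 1"
    then obtain q where "prime q" "q dvd m" using prime_factor_nat by blast
    then show False using unit_at m_dvd by (meson dvd_trans int_dvd_int_iff)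
  qed
  then show ?thesis using m(2) by simp
qed

lemma in_order_if_in_all_loc_orders:
  assumes "is_order a b Ov" "\<And>q. prime q \<Longrightarrow> x \<in> loc_order Ov q"
  shows "x \<in> Ov"
proof -
  let ?I = "{n::int. qscal (of_int n) x \<in> Ov}"
  have "m - k * n \<in> ?I" if "m \<in> ?I" "n \<in> ?I" for m n k
  proof -
    have "qscal (of_int (m - k * n)) x
        = qadd (qscal (of_int m) x) (qneg (qscal (of_int k) (qscal (of_int n) x)))"
      by (simp add: qscal_def qadd_def qneg_def algebra_simps)
    then show ?thesis using that is_orderD(2,4) order_qscal_of_int assms(1) by simp
  qed
  moreover have "\<exists>n\<in>?I. \<not> int q dvd n" if "prime q" for q
    using assms(2)[OF that] unfolding loc_order_def by blast
  ultimately have "1 \<in> ?I" by (rule one_in_int_ideal)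
  then show ?thesis by simp
qed

section \<open>Unitary similitudes\<close>

lemma vmul_assoc: "vmul a b (vmul a b v g) h = vmul a b v (mmul a b g h)"
  unfolding vmul_def mmul_def
  by (simp only: mat2.sel prod.sel qmul_distrib_left qmul_distrib_right qmul_assoc qadd_ac)

lemma vmul_mscal: "vmul a b v (mscal r) = (qscal r (fst v), qscal r (snd v))"
  by (simp add: vmul_def mscal_def qmul_qrat)

lemma vmul_mone: "vmul a b v mone = v"
  by (simp add: mone_def vmul_mscal)

lemma vmul_unit_rows:
  "vmul a b (qone, qzero) g = (m11 g, m12 g)" "vmul a b (qzero, qone) g = (m21 g, m22 g)"
  by (simp_all add: vmul_def)

lemma loc_order_vmul:
  assumes "is_order a b Ov" "prime q" "v \<in> loc_order Ov q \<times> loc_order Ov q"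
    "entries_in g (loc_order Ov q)"
  shows "vmul a b v g \<in> loc_order Ov q \<times> loc_order Ov q"
  using assms unfolding vmul_def entries_in_def
  by (auto intro!: loc_order_qadd loc_order_qmul)

lemma sim_eqI: "mmul a b g (mconjT g) = mscal \<mu> \<Longrightarrow> sim a b g = \<mu>"
  unfolding sim_def by (rule the_equality) (auto simp: mscal_def qrat_eq_iff)

lemma mmul_mconjT_sim: "g \<in> GU2 a b \<Longrightarrow> mmul a b g (mconjT g) = mscal (sim a b g)"
  unfolding GU2_def using sim_eqI by fastforce

lemma sim_eq_row_qnorm:
  assumes "g \<in> GU2 a b"
  shows "sim a b g = qnorm a b (m11 g) + qnorm a b (m12 g)"
proof -
  have "qadd (qmul a b (m11 g) (qconj (m11 g))) (qmul a b (m12 g) (qconj (m12 g))) = qrat (sim a b g)"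
    using arg_cong[OF mmul_mconjT_sim[OF assms], of m11] by (simp add: mmul_def mconjT_def mscal_def)
  then show ?thesis by (simp add: qmul_self_qconj qadd_qrat qrat_eq_iff)
qed

lemma sim_nonzero: "g \<in> GU2 a b \<Longrightarrow> sim a b g \<noteq> 0"
  unfolding GU2_def using sim_eqI by blast

lemma sim_pos:
  assumes "a < 0" "b < 0" "g \<in> GU2 a b"
  shows "0 < sim a b g"
  using sim_nonzero[OF assms(3)] qnorm_nonneg[OF assms(1,2)]
  unfolding sim_eq_row_qnorm[OF assms(3)] by (simp add: add_nonneg_nonneg order_le_neq_trans)

lemma mconjT_left_inverse:
  assumes ab: "a < 0" "b < 0" and right: "mmul a b g (mconjT g) = mone"
  shows "mmul a b (mconjT g) g = mone"
proof -
  obtain A B C D where g: "g = M2 A B C D" by (cases g)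
  have "qadd (qrat (qnorm a b A)) (qrat (qnorm a b B)) = qrat 1"
    and "qadd (qrat (qnorm a b C)) (qrat (qnorm a b D)) = qrat 1"
    and off: "qadd (qmul a b A (qconj C)) (qmul a b B (qconj D)) = qzero"
    using right unfolding g by (simp_all add: mmul_def mconjT_def mone_def mscal_def qmul_self_qconj)
  then have AB: "qnorm a b A + qnorm a b B = 1" and CD: "qnorm a b C + qnorm a b D = 1"
    by (simp_all add: qadd_qrat qrat_eq_iff)
  have AC: "qmul a b A (qconj C) = qneg (qmul a b B (qconj D))"
    using qadd_eq_qzero_imp[OF off] .
  have "qnorm a b A * qnorm a b C = qnorm a b B * qnorm a b D"
    using arg_cong[OF AC, of "qnorm a b"] unfolding qnorm_qmul qnorm_qneg qnorm_qconj .
  then have "qnorm a b A * qnorm a b C = (1 - qnorm a b A) * (1 - qnorm a b C)"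
    using AB CD by (metis add_diff_cancel_left')
  then have AC_norm: "qnorm a b A + qnorm a b C = 1"
    unfolding left_diff_distrib right_diff_distrib by linarith
  then have DA_norm: "qnorm a b D = qnorm a b A" using CD by simp
  then have BD_norm: "qnorm a b B + qnorm a b D = 1" using AB by simp
  define \<beta> where "\<beta> = qadd (qmul a b (qconj A) B) (qmul a b (qconj C) D)"
  \<comment> \<open>\<open>A \<beta> = N(A) B - B N(D) = 0\<close>, so \<open>\<beta> = 0\<close> unless \<open>A = 0\<close>, which forces \<open>D = 0\<close>\<close>
  have "qmul a b A \<beta> = qadd (qscal (qnorm a b A) B) (qneg (qscal (qnorm a b D) B))"
    unfolding \<beta>_def qmul_distrib_left
    by (simp only: AC flip: qmul_assoc)
      (simp only: qmul_self_qconj qmul_qconj_self qmul_qrat qmul_qneg qmul_assoc)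
  then have "qmul a b A \<beta> = qzero" using DA_norm qadd_qscal_qneg by simp
  then have "qnorm a b A = 0 \<or> qnorm a b \<beta> = 0"
    using qnorm_qmul[of a b A \<beta>] by simp
  then have \<beta>: "\<beta> = qzero"
  proof
    assume "qnorm a b A = 0"
    then have "A = qzero" "D = qzero" using DA_norm qnorm_eq_0_iff[OF ab] by simp_all
    then show ?thesis unfolding \<beta>_def by simp
  qed (simp add: qnorm_eq_0_iff[OF ab])
  have "qadd (qmul a b (qconj B) A) (qmul a b (qconj D) C) = qzero"
    using arg_cong[OF \<beta>, of qconj] unfolding \<beta>_def qconj_qadd qconj_qmul by simp
  moreover have "mmul a b (mconjT g) g = M2 (qrat (qnorm a b A + qnorm a b C)) \<beta>
      (qadd (qmul a b (qconj B) A) (qmul a b (qconj D) C)) (qrat (qnorm a b B + qnorm a b D))"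
    unfolding g \<beta>_def by (simp add: mmul_def mconjT_def qmul_qconj_self qadd_qrat)
  ultimately show ?thesis
    using AC_norm BD_norm \<beta> by (simp add: mone_def mscal_def)
qed

section \<open>The stabiliser of the local lattices\<close>

definition stabilises :: "int \<Rightarrow> int \<Rightarrow> mat2 \<Rightarrow> quat set \<Rightarrow> bool" where
  "stabilises a b g L \<longleftrightarrow> (\<lambda>v. vmul a b v g) ` (L \<times> L) = L \<times> L"

lemma Gamma1_iff:
  "g \<in> Gamma1 a b Ov \<longleftrightarrow> g \<in> GU2 a b \<and> (\<forall>q. prime q \<longrightarrow> stabilises a b g (loc_order Ov q))"
  unfolding Gamma1_def stabilises_def by blast

lemma stabilises_entries_in:
  assumes "stabilises a b g L" "qone \<in> L" "qzero \<in> L"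
  shows "entries_in g L"
proof -
  have "vmul a b (qone, qzero) g \<in> L \<times> L" "vmul a b (qzero, qone) g \<in> L \<times> L"
    using assms unfolding stabilises_def by blast+
  then show ?thesis unfolding vmul_unit_rows entries_in_def by simp
qed

lemma stabilises_sim_inverse:
  assumes "g \<in> GU2 a b" "stabilises a b g L" "qone \<in> L" "qzero \<in> L"
  obtains x y where "x \<in> L" "y \<in> L" "sim a b g * (qnorm a b x + qnorm a b y) = 1"
proof -
  let ?\<mu> = "sim a b g"
  have "(qone, qzero) \<in> (\<lambda>v. vmul a b v g) ` (L \<times> L)" "(qzero, qone) \<in> (\<lambda>v. vmul a b v g) ` (L \<times> L)"
    using assms(2-4) unfolding stabilises_def by auto
  then obtain v w where v: "v \<in> L \<times> L" "vmul a b v g = (qone, qzero)"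
    and w: "w \<in> L \<times> L" "vmul a b w g = (qzero, qone)"
    unfolding image_iff by (metis (no_types, lifting))
  \<comment> \<open>right multiplication by \<open>g\<^sup>*\<close> turns \<open>v g = e\<^sub>i\<close> into \<open>\<mu> v = e\<^sub>i g\<^sup>*\<close>\<close>
  have scaled: "vmul a b (vmul a b u g) (mconjT g) = (qscal ?\<mu> (fst u), qscal ?\<mu> (snd u))" for u
    unfolding vmul_assoc mmul_mconjT_sim[OF assms(1)] vmul_mscal ..
  have "vmul a b (qone, qzero) (mconjT g) = (qconj (m11 g), qconj (m21 g))"
    "vmul a b (qzero, qone) (mconjT g) = (qconj (m12 g), qconj (m22 g))"
    by (simp_all add: vmul_unit_rows mconjT_def)
  then have "qscal ?\<mu> (fst v) = qconj (m11 g)" "qscal ?\<mu> (fst w) = qconj (m12 g)"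
    using scaled[of v] scaled[of w] v(2) w(2) by simp_all
  then have "?\<mu> = qnorm a b (qscal ?\<mu> (fst v)) + qnorm a b (qscal ?\<mu> (fst w))"
    using sim_eq_row_qnorm[OF assms(1)] by simp
  then have "?\<mu> = ?\<mu> ^ 2 * (qnorm a b (fst v) + qnorm a b (fst w))"
    by (simp add: qnorm_qscal distrib_left)
  then have "?\<mu> * (qnorm a b (fst v) + qnorm a b (fst w)) = 1"
    using sim_nonzero[OF assms(1)] by (simp add: power2_eq_square)
  then show ?thesis using that[of "fst v" "fst w"] v(1) w(1) by (simp add: mem_Times_iff)
qed

lemma Gamma1_subset_GU2O:
  assumes ab: "a < 0" "b < 0" and O: "is_order a b Ov" and g: "g \<in> Gamma1 a b Ov"
  shows "g \<in> GU2O a b Ov"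
proof -
  have gG: "g \<in> GU2 a b" and stab: "\<And>q. prime q \<Longrightarrow> stabilises a b g (loc_order Ov q)"
    using g unfolding Gamma1_iff by blast+
  have units: "qone \<in> loc_order Ov q" "qzero \<in> loc_order Ov q" if "prime q" for q
    using order_subset_loc_order[OF that] is_orderD(1)[OF O] order_qzero[OF O] by blast+
  have "entries_in g (loc_order Ov q)" if "prime q" for q
    using stabilises_entries_in[OF stab[OF that] units[OF that]] .
  then have ent: "entries_in g Ov"
    unfolding entries_in_def using in_order_if_in_all_loc_orders[OF O] by simp
  then have "qnorm a b (m11 g) \<in> \<int>" "qnorm a b (m12 g) \<in> \<int>"
    unfolding entries_in_def using order_qnorm_in_Ints[OF O] by simp_all
  then have "sim a b g \<in> \<int>"
    unfolding sim_eq_row_qnorm[OF gG] by (rule Ints_add)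
  then obtain M where M: "sim a b g = of_int M" by (elim Ints_cases)
  have "\<not> int q dvd M" if q: "prime q" for q
  proof -
    obtain x y where "x \<in> loc_order Ov q" "y \<in> loc_order Ov q"
        and inv: "of_int M * (qnorm a b x + qnorm a b y) = 1"
      using stabilises_sim_inverse[OF gG stab[OF q] units[OF q]] unfolding M .
    then have "qnorm a b x + qnorm a b y \<in> Ints_loc q"
      using Ints_loc_add[OF q] qnorm_loc_order_in_Ints_loc[OF O q] by blast
    then show ?thesis using not_dvd_if_inverse_in_Ints_loc[OF inv] by blast
  qed
  moreover have "0 < M" using sim_pos[OF ab gG] M by simp
  ultimately have "M = 1" by (rule pos_int_eq_1_if_no_prime_divisor[rotated])
  then show ?thesis using gG ent M unfolding GU2O_def by simp
qed

lemma GU2O_subset_SU2_GL2O: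
  assumes ab: "a < 0" "b < 0" and O: "is_order a b Ov" and g: "g \<in> GU2O a b Ov"
  shows "g \<in> SU2 a b \<inter> GL2O a b Ov"
proof -
  have gG: "g \<in> GU2 a b" and ent: "entries_in g Ov" and "sim a b g \<in> {1, -1}"
    using g unfolding GU2O_def by auto
  then have sim1: "sim a b g = 1" using sim_pos[OF ab gG] by auto
  then have right: "mmul a b g (mconjT g) = mone"
    using mmul_mconjT_sim[OF gG] by (simp add: mone_def)
  moreover have "entries_in (mconjT g) Ov"
    using ent order_qconj[OF O] unfolding entries_in_def mconjT_def by simp
  ultimately show ?thesis
    using gG sim1 ent mconjT_left_inverse[OF ab right] unfolding SU2_def GL2O_def by blast
qed

lemma SU2_GL2O_subset_Gamma1:
  assumes O: "is_order a b Ov" and g: "g \<in> SU2 a b \<inter> GL2O a b Ov"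
  shows "g \<in> Gamma1 a b Ov"
proof -
  obtain h where gG: "g \<in> GU2 a b" and ent: "entries_in g Ov" "entries_in h Ov"
    and hg: "mmul a b h g = mone"
    using g unfolding SU2_def GL2O_def by blast
  have "stabilises a b g (loc_order Ov q)" if q: "prime q" for q
  proof -
    let ?L = "loc_order Ov q"
    have "entries_in g ?L" "entries_in h ?L"
      using ent order_subset_loc_order[OF q] unfolding entries_in_def by blast+
    then have closed: "vmul a b v g \<in> ?L \<times> ?L" "vmul a b v h \<in> ?L \<times> ?L" if "v \<in> ?L \<times> ?L" for v
      using loc_order_vmul[OF O q that] by blast+
    have "v = vmul a b (vmul a b v h) g" for v
      by (simp add: vmul_assoc hg vmul_mone)
    then show ?thesis
      unfolding stabilises_def using closed by blast
  qed
  then show ?thesis using gG unfolding Gamma1_iff by blast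
qed

theorem lemma5p2:
  fixes p :: nat and a b :: int and Ov :: "quat set"
  assumes "prime p" and "a \<noteq> 0" and "b \<noteq> 0"
    and "ramified_inf a b" and "ramified_at a b p"
    and "\<forall>q. prime q \<and> q \<noteq> p \<longrightarrow> \<not> ramified_at a b q"
    and "maximal_order a b Ov"
  shows "Gamma1 a b Ov = SU2 a b \<inter> GL2O a b Ov \<and> SU2 a b \<inter> GL2O a b Ov = GU2O a b Ov"
proof -
  have ab: "a < 0" "b < 0" using ramified_inf_imp_neg[OF assms(4)] .
  have O: "is_order a b Ov" using assms(7) unfolding maximal_order_def by blast
  have "Gamma1 a b Ov \<subseteq> GU2O a b Ov" using Gamma1_subset_GU2O[OF ab O] by blast
  moreover have "GU2O a b Ov \<subseteq> SU2 a b \<inter> GL2O a b Ov" using GU2O_subset_SU2_GL2O[OF ab O] by blast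
  moreover have "SU2 a b \<inter> GL2O a b Ov \<subseteq> Gamma1 a b Ov" using SU2_GL2O_subset_Gamma1[OF O] by blast
  moreover have "SU2 a b \<inter> GL2O a b Ov \<subseteq> GU2O a b Ov" unfolding SU2_def GL2O_def GU2O_def by blast
  ultimately show ?thesis by blast
qed

end
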